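(* Let $G$ be a $\gamma_t$-critical graph of order $n$ with $\gamma_t(G)=n-\Delta(G)$ and $\delta(G)\ge 2$. Let $v$ be a vertex with $d(v)=\Delta(G)$, let $S=V(G)\setminus N[v]$, and let $H_1,\dots,H_t$ be the connected components of $G[S]$. Then: (1) each $H_i$ is isomorphic to $P_2$ or $P_3$; (2) if some $H_i$ is isomorphic to $P_3$, then $G[S]$ itself is a path $P_3=u_1u_2u_3$ (so $t=1$); moreover $N(u_2)\cap N(v)=\emptyset$, and $N(v)$ is the disjoint union of the two nonempty sets $N(u_1)\setminus\{u_2\}$ and $N(u_3)\setminus\{u_2\}$; (3) if every $H_i$ is isomorphic to $P_2$, say $H_i=u_iw_i$, then $N(u)\cap N(v)\neq\emptyset$ for every $u\in S$, and $N(v)$ is the disjoint union of the sets $N(u_1)\setminus\{w_1\},\,N(w_1)\setminus\{u_1\},\dots,N(u_t)\setminus\{w_t\},\,N(w_t)\setminus\{u_t\}$.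
   Context: All graphs are finite and simple. $N(x)$ is the neighborhood of $x$, $N[x]=N(x)\cup\{x\}$, $d(x)=|N(x)|$, $G[X]$ the subgraph induced by $X$, $P_k$ the path on $k$ vertices. A set $S\subseteq V(G)$ is a total dominating set if every vertex of $G$ is adjacent to some vertex of $S$; $\gamma_t(G)$ is the minimum size of such a set. A leaf is a vertex of degree one. A graph $G$ with no isolated vertex is $\gamma_t$-critical if for every vertex $v$ not adjacent to a leaf, $\gamma_t(G-v)<\gamma_t(G)$. *)

theory Defs
  imports Main
begin

text \<open>All notions are taken relative to the vertex set,
so that G - v is (V - {v}, E) and G[S] is (S, E).\<close>

definition graph :: "'a set \<Rightarrow> ('a \<Rightarrow> 'a \<Rightarrow> bool) \<Rightarrow> bool" where
  "graph V E \<longleftrightarrow> finite V \<and> (\<forall>x y. E x y \<longrightarrow> E y x) \<and> (\<forall>x. \<not> E x x)"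

definition nbhd :: "'a set \<Rightarrow> ('a \<Rightarrow> 'a \<Rightarrow> bool) \<Rightarrow> 'a \<Rightarrow> 'a set" where
  "nbhd V E x = {y \<in> V. E x y}"

definition cnbhd :: "'a set \<Rightarrow> ('a \<Rightarrow> 'a \<Rightarrow> bool) \<Rightarrow> 'a \<Rightarrow> 'a set" where
  "cnbhd V E x = insert x (nbhd V E x)"

definition deg :: "'a set \<Rightarrow> ('a \<Rightarrow> 'a \<Rightarrow> bool) \<Rightarrow> 'a \<Rightarrow> nat" where
  "deg V E x = card (nbhd V E x)"

definition max_deg :: "'a set \<Rightarrow> ('a \<Rightarrow> 'a \<Rightarrow> bool) \<Rightarrow> nat" where
  "max_deg V E = Max (deg V E ` V)"

definition min_deg :: "'a set \<Rightarrow> ('a \<Rightarrow> 'a \<Rightarrow> bool) \<Rightarrow> nat" where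
  "min_deg V E = Min (deg V E ` V)"

definition is_leaf :: "'a set \<Rightarrow> ('a \<Rightarrow> 'a \<Rightarrow> bool) \<Rightarrow> 'a \<Rightarrow> bool" where
  "is_leaf V E x \<longleftrightarrow> x \<in> V \<and> deg V E x = 1"

definition no_isolated :: "'a set \<Rightarrow> ('a \<Rightarrow> 'a \<Rightarrow> bool) \<Rightarrow> bool" where
  "no_isolated V E \<longleftrightarrow> (\<forall>x\<in>V. nbhd V E x \<noteq> {})"

definition total_dom :: "'a set \<Rightarrow> ('a \<Rightarrow> 'a \<Rightarrow> bool) \<Rightarrow> 'a set \<Rightarrow> bool" where
  "total_dom V E D \<longleftrightarrow> D \<subseteq> V \<and> (\<forall>x\<in>V. \<exists>y\<in>D. E x y)"

definition gamma_t :: "'a set \<Rightarrow> ('a \<Rightarrow> 'a \<Rightarrow> bool) \<Rightarrow> nat" where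
  "gamma_t V E = (LEAST k. \<exists>D. total_dom V E D \<and> card D = k)"

definition gamma_t_critical :: "'a set \<Rightarrow> ('a \<Rightarrow> 'a \<Rightarrow> bool) \<Rightarrow> bool" where
  "gamma_t_critical V E \<longleftrightarrow> no_isolated V E \<and>
     (\<forall>v\<in>V. (\<not> (\<exists>u\<in>nbhd V E v. is_leaf V E u)) \<longrightarrow>
         gamma_t (V - {v}) E < gamma_t V E)"

definition connected_set :: "('a \<Rightarrow> 'a \<Rightarrow> bool) \<Rightarrow> 'a set \<Rightarrow> bool" where
  "connected_set E C \<longleftrightarrow>
     (\<forall>x\<in>C. \<forall>y\<in>C. (\<lambda>a b. a \<in> C \<and> b \<in> C \<and> E a b)\<^sup>*\<^sup>* x y)"

definition component :: "'a set \<Rightarrow> ('a \<Rightarrow> 'a \<Rightarrow> bool) \<Rightarrow> 'a set \<Rightarrow> bool" where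
  "component S E C \<longleftrightarrow> C \<noteq> {} \<and> C \<subseteq> S \<and> connected_set E C \<and>
     (\<forall>x\<in>C. \<forall>y\<in>S - C. \<not> E x y)"

definition iso_P2 :: "('a \<Rightarrow> 'a \<Rightarrow> bool) \<Rightarrow> 'a set \<Rightarrow> bool" where
  "iso_P2 E C \<longleftrightarrow> (\<exists>a b. C = {a, b} \<and> a \<noteq> b \<and> E a b)"

definition iso_P3 :: "('a \<Rightarrow> 'a \<Rightarrow> bool) \<Rightarrow> 'a set \<Rightarrow> bool" where
  "iso_P3 E C \<longleftrightarrow> (\<exists>a b c. C = {a, b, c} \<and> a \<noteq> b \<and> b \<noteq> c \<and> a \<noteq> c \<and>
                          E a b \<and> E b c \<and> \<not> E a c)"

end

theory Submission imports Defs begin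

(* Then gamma_t(G) = |S| + 1, and
   {v} together with any set that contains a neighbour of v and totally dominates S is a total
   dominating set of G.  Hence no set of size |S| - 1 containing a neighbour of v dominates S.
   Combined with criticality (deleting a vertex x leaves a total dominating set of G - x that
   avoids N(x) and is smaller than gamma_t(G)) this yields a handful of local facts:
   every vertex other than v has a neighbour in S, every edge xy has a "private" neighbour of y
   outside N[x], and for any two vertices p, q of S some vertex of S has all its S-neighbours
   in {p, q} and misses a prescribed neighbour of v. *)

section \<open>Connected vertex sets\<close>

lemma rtranclp_leaves_set:
  assumes "r\<^sup>*\<^sup>* x y" "x \<in> T" "y \<notin> T"
  shows "\<exists>a b. r a b \<and> a \<in> T \<and> b \<notin> T"
  using assms by (induction rule: rtranclp.induct) blast+

lemma connected_set_crossing_edge: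
  assumes sym: "\<And>x y. E x y \<Longrightarrow> E y x" and conn: "connected_set E C"
    and T: "T \<subseteq> C" "T \<noteq> {}" "T \<noteq> C"
  shows "\<exists>a\<in>T. \<exists>b\<in>C - T. E b a"
proof -
  obtain x y where xy: "x \<in> T" "y \<in> C" "y \<notin> T" using T by blast
  have "(\<lambda>a b. a \<in> C \<and> b \<in> C \<and> E a b)\<^sup>*\<^sup>* x y"
    using conn xy T(1) unfolding connected_set_def by blast
  then obtain a b where "a \<in> C" "b \<in> C" "E a b" "a \<in> T" "b \<notin> T"
    using rtranclp_leaves_set[of _ x y T] xy by blast
  then show ?thesis using sym by blast
qed

lemma component_exists:
  assumes sym: "\<And>x y. E x y \<Longrightarrow> E y x" and s: "s \<in> S"
  shows "\<exists>C. component S E C \<and> s \<in> C"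
proof -
  define R where "R = (\<lambda>a b. a \<in> S \<and> b \<in> S \<and> E a b)"
  define C where "C = {y. R\<^sup>*\<^sup>* s y}"
  define RC where "RC = (\<lambda>a b. a \<in> C \<and> b \<in> C \<and> E a b)"
  have sC: "s \<in> C" unfolding C_def by simp
  have CS: "C \<subseteq> S"
  proof
    fix y assume "y \<in> C"
    then have "R\<^sup>*\<^sup>* s y" unfolding C_def by simp
    then show "y \<in> S" using s by (induction rule: rtranclp.induct) (auto simp: R_def)
  qed
  have walk_in_C: "RC\<^sup>*\<^sup>* s y" if "R\<^sup>*\<^sup>* s y" for y
    using that
  proof (induction rule: rtranclp_induct)
    case (step b c)
    then have "RC b c"
      unfolding RC_def C_def R_def by (auto intro: rtranclp.rtrancl_into_rtrancl)
    with step(3) show ?case by (rule rtranclp.rtrancl_into_rtrancl)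
  qed simp
  have symm: "symp RC\<^sup>*\<^sup>*" by (rule symp_rtranclp) (auto simp: RC_def sym intro: sympI)
  have "connected_set E C"
    unfolding connected_set_def RC_def[symmetric]
  proof (intro ballI)
    fix x y assume "x \<in> C" "y \<in> C"
    then have "RC\<^sup>*\<^sup>* s x" "RC\<^sup>*\<^sup>* s y" using walk_in_C unfolding C_def by auto
    then show "RC\<^sup>*\<^sup>* x y" using sympD[OF symm] rtranclp_trans by metis
  qed
  moreover have "\<forall>x\<in>C. \<forall>y\<in>S - C. \<not> E x y"
    using CS unfolding C_def R_def by (auto intro: rtranclp.rtrancl_into_rtrancl)
  ultimately show ?thesis unfolding component_def using sC CS by blast
qed

text \<open>A set X dominating part T of a connected set with |X| + k \<le> |T| can be extended,
  one crossing edge at a time, to a set dominating all of C with the same surplus k.\<close>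
lemma dominating_set_extends:
  assumes fin: "finite C"
    and cross: "\<And>T. T \<subseteq> C \<Longrightarrow> T \<noteq> {} \<Longrightarrow> T \<noteq> C \<Longrightarrow> \<exists>a\<in>T. \<exists>b\<in>C - T. E b a"
  shows "T \<subseteq> C \<Longrightarrow> T \<noteq> {} \<Longrightarrow> X \<subseteq> T \<Longrightarrow> card X + k \<le> card T \<Longrightarrow> \<forall>x\<in>T. \<exists>y\<in>X. E x y
     \<Longrightarrow> \<exists>X\<subseteq>C. card X + k \<le> card C \<and> (\<forall>x\<in>C. \<exists>y\<in>X. E x y)"
proof (induction "card (C - T)" arbitrary: T X rule: less_induct)
  case less
  show ?case
  proof (cases "T = C")
    case True then show ?thesis using less.prems(3-5) by blast
  next
    case False
    then obtain a b where ab: "a \<in> T" "b \<in> C - T" "E b a" using cross less.prems(1,2) by blast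
    have finT: "finite T" using less.prems(1) fin by (rule finite_subset)
    have finX: "finite X" using less.prems(3) finT by (rule finite_subset)
    have shrink: "card (C - insert b T) < card (C - T)"
      using ab fin by (metis Diff_insert card_Diff1_less finite_Diff)
    have sub: "insert b T \<subseteq> C" "insert a X \<subseteq> insert b T" using ab less.prems(1,3) by auto
    have size: "card (insert a X) + k \<le> card (insert b T)"
      using less.prems(4) ab finT finX by (simp add: card_insert_if)
    have dom: "\<forall>x\<in>insert b T. \<exists>y\<in>insert a X. E x y" using less.prems(5) ab by blast
    show ?thesis by (rule less(1)[OF shrink sub(1) _ sub(2) size dom]) simp
  qed
qed

lemma grown_four_vertices_dominated_by_two:
  assumes sym: "\<And>x y. E x y \<Longrightarrow> E y x"
    and "E a b" "t \<in> {a, b}" "E z t" "t' \<in> {a, b, z}" "E z' t'"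
  shows "\<exists>X\<subseteq>{a, b, z, z'}. card X \<le> 2 \<and> (\<forall>x\<in>{a, b, z, z'}. \<exists>y\<in>X. E x y)"
proof (cases "t' \<in> {a, b}")
  case True
  have "\<forall>x\<in>{a, b, z, z'}. \<exists>y\<in>{a, b}. E x y" using assms True by blast
  then show ?thesis by (intro exI[of _ "{a, b}"]) (auto simp: card_insert_if)
next
  case False
  have "\<forall>x\<in>{a, b, z, z'}. \<exists>y\<in>{t, z}. E x y" using assms False by blast
  then show ?thesis using assms(3) by (intro exI[of _ "{t, z}"]) (auto simp: card_insert_if)
qed

lemma connected_set_small_dominating_set:
  assumes sym: "\<And>x y. E x y \<Longrightarrow> E y x" and fin: "finite C" and conn: "connected_set E C"
    and four: "card C \<ge> 4"
  shows "\<exists>X\<subseteq>C. card X + 2 \<le> card C \<and> (\<forall>x\<in>C. \<exists>y\<in>X. E x y)"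
proof -
  note cross = connected_set_crossing_edge[OF sym conn]
  have proper: "T \<noteq> C" if "card T \<le> 3" for T using that four by auto
  obtain a where a: "a \<in> C" using four by fastforce
  obtain b where b: "b \<in> C" "b \<noteq> a" "E b a"
    using cross[of "{a}"] a proper[of "{a}"] by auto
  obtain t z where tz: "t \<in> {a, b}" "z \<in> C" "z \<notin> {a, b}" "E z t"
    using cross[of "{a, b}"] a b proper[of "{a, b}"] by (auto simp: card_insert_if)
  obtain t' z' where tz': "t' \<in> {a, b, z}" "z' \<in> C" "z' \<notin> {a, b, z}" "E z' t'"
    using cross[of "{a, b, z}"] a b tz proper[of "{a, b, z}"] by (auto simp: card_insert_if)
  let ?T = "{a, b, z, z'}"
  have "card ?T = 4" using b tz tz' by (auto simp: card_insert_if)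
  moreover obtain X where X: "X \<subseteq> ?T" "card X \<le> 2" "\<forall>x\<in>?T. \<exists>y\<in>X. E x y"
    using grown_four_vertices_dominated_by_two[OF sym sym[OF b(3)] tz(1,4) tz'(1,4)] by blast
  moreover have "?T \<subseteq> C" using a b tz tz' by blast
  ultimately show ?thesis
    using dominating_set_extends[OF fin cross, of ?T X 2] by simp
qed

lemma small_set_shapes:
  assumes sym: "\<And>x y. E x y \<Longrightarrow> E y x" and irr: "\<And>x. \<not> E x x"
    and fin: "finite C" and small: "card C \<le> 3" and a: "a \<in> C"
    and nbr: "\<forall>x\<in>C. \<exists>y\<in>C. E x y"
  shows "iso_P2 E C \<or> iso_P3 E C \<or> (\<exists>a b c. C = {a, b, c} \<and> E a b \<and> E b c \<and> E a c)"
proof -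
  obtain b where b: "b \<in> C" "E a b" using nbr a by blast
  have ab: "a \<noteq> b" using b irr by blast
  show ?thesis
  proof (cases "C = {a, b}")
    case True then show ?thesis unfolding iso_P2_def using ab b by blast
  next
    case False
    then obtain d where d: "d \<in> C" "d \<noteq> a" "d \<noteq> b" using a b by blast
    have "card {a, b, d} = 3" using ab d by simp
    then have C: "C = {a, b, d}"
      using a b d small by (metis card_seteq fin empty_subsetI insert_subset)
    have "E a d \<or> E b d" using nbr d C irr sym by fastforce
    then consider "E a d" "E b d" | "E a d" "\<not> E b d" | "\<not> E a d" "E b d" by blast
    then show ?thesis
    proof cases
      case 1 then show ?thesis using C b sym by blast
    next
      case 2 then have "iso_P3 E C"
        unfolding iso_P3_def using C ab d b sym by (intro exI[of _ b] exI[of _ a] exI[of _ d]) auto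
      then show ?thesis by blast
    next
      case 3 then have "iso_P3 E C"
        unfolding iso_P3_def using C ab d b sym by (intro exI[of _ a] exI[of _ b] exI[of _ d]) auto
      then show ?thesis by blast
    qed
  qed
qed

section \<open>The extremal critical setting\<close>

locale extremal_critical =
  fixes V :: "'a set" and E :: "'a \<Rightarrow> 'a \<Rightarrow> bool" and v :: 'a and S :: "'a set"
  assumes graph: "graph V E" and critical: "gamma_t_critical V E"
    and gamma_t_extremal: "gamma_t V E = card V - max_deg V E"
    and min_deg_2: "min_deg V E \<ge> 2"
    and v_in_V: "v \<in> V" and v_max_deg: "deg V E v = max_deg V E"
    and S_def: "S = V - cnbhd V E v"
begin

lemma finite_V: "finite V" using graph unfolding graph_def by blast
lemma sym: "E x y \<Longrightarrow> E y x" using graph unfolding graph_def by blast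
lemma irrefl: "\<not> E x x" using graph unfolding graph_def by blast

lemma S_iff: "s \<in> S \<longleftrightarrow> s \<in> V \<and> s \<noteq> v \<and> \<not> E v s"
  unfolding S_def cnbhd_def nbhd_def by auto

lemma finite_S: "finite S" using finite_V S_def by simp

lemma adj_v_if_not_in_S: "x \<in> V \<Longrightarrow> x \<noteq> v \<Longrightarrow> x \<notin> S \<Longrightarrow> E v x"
  using S_iff by blast

lemma S_not_adj_v: "s \<in> S \<Longrightarrow> \<not> E s v"
  using S_iff sym by blast

lemma neighbour_other_than:
  assumes x: "x \<in> V"
  shows "\<exists>y\<in>V. E x y \<and> y \<noteq> u"
proof (rule ccontr)
  assume "\<not> ?thesis"
  then have "nbhd V E x \<subseteq> {u}" unfolding nbhd_def by auto
  then have "deg V E x \<le> 1" unfolding deg_def using card_mono[of "{u}"] by fastforce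
  moreover have "min_deg V E \<le> deg V E x" unfolding min_deg_def using finite_V x by simp
  ultimately show False using min_deg_2 by linarith
qed

lemma no_leaf: "\<not> is_leaf V E u"
proof
  assume "is_leaf V E u"
  then have u: "u \<in> V" "card (nbhd V E u) = 1" unfolding is_leaf_def deg_def by auto
  then obtain y where "nbhd V E u = {y}" using card_1_singletonE by metis
  moreover obtain z where "z \<in> V" "E u z" "z \<noteq> y" using neighbour_other_than[OF u(1)] by blast
  ultimately show False unfolding nbhd_def by blast
qed

lemma gamma_t_le: "total_dom V E D \<Longrightarrow> gamma_t V E \<le> card D"
  unfolding gamma_t_def by (rule Least_le) blast

lemma gamma_t_eq: "gamma_t V E = card S + 1"
proof -
  have "finite (nbhd V E v)" "v \<notin> nbhd V E v"
    using finite_V irrefl unfolding nbhd_def by simp_all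
  then have closed: "card (cnbhd V E v) = max_deg V E + 1"
    unfolding cnbhd_def using v_max_deg by (simp add: deg_def)
  have sub: "cnbhd V E v \<subseteq> V" using v_in_V unfolding cnbhd_def nbhd_def by auto
  then have "card S = card V - card (cnbhd V E v)"
    unfolding S_def using finite_V by (simp add: card_Diff_subset finite_subset)
  moreover have "card (cnbhd V E v) \<le> card V" using sub finite_V card_mono by blast
  ultimately show ?thesis using gamma_t_extremal closed by linarith
qed

text \<open>Criticality: for every vertex x some set smaller than gamma_t(G) avoids N[x] and totally
  dominates G - x (it cannot contain a neighbour of x, else it would dominate G).\<close>
lemma deletion_witness:
  assumes x: "x \<in> V"
  shows "\<exists>D. D \<subseteq> V - {x} \<and> (\<forall>y\<in>V - {x}. \<exists>d\<in>D. E y d) \<and> (\<forall>d\<in>D. \<not> E x d)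
           \<and> card D < gamma_t V E"
proof -
  have "\<forall>v\<in>V. \<not> (\<exists>u\<in>nbhd V E v. is_leaf V E u) \<longrightarrow> gamma_t (V - {v}) E < gamma_t V E"
    using critical unfolding gamma_t_critical_def by (rule conjunct2)
  then have lt: "gamma_t (V - {x}) E < gamma_t V E" using x no_leaf by blast
  have "total_dom (V - {x}) E (V - {x})"
    unfolding total_dom_def using neighbour_other_than by blast
  then have "\<exists>k D. total_dom (V - {x}) E D \<and> card D = k" by blast
  then have "\<exists>D. total_dom (V - {x}) E D \<and> card D = gamma_t (V - {x}) E"
    unfolding gamma_t_def by (rule LeastI_ex)
  then obtain D where D: "total_dom (V - {x}) E D" "card D = gamma_t (V - {x}) E" by blast
  have "\<forall>d\<in>D. \<not> E x d"
  proof (intro ballI notI)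
    fix d assume "d \<in> D" "E x d"
    then have "total_dom V E D" using D(1) unfolding total_dom_def by blast
    then show False using gamma_t_le[of D] D(2) lt by linarith
  qed
  moreover have "D \<subseteq> V - {x}" "\<forall>y\<in>V - {x}. \<exists>d\<in>D. E y d"
    using D(1) unfolding total_dom_def by auto
  ultimately show ?thesis using D(2) lt by (intro exI[of _ D]) simp
qed

lemma private_neighbour:
  assumes "x \<in> V" "y \<in> V" "E x y"
  shows "\<exists>z\<in>V. E y z \<and> z \<noteq> x \<and> \<not> E x z"
proof -
  obtain D where "D \<subseteq> V - {x}" "\<forall>y\<in>V - {x}. \<exists>d\<in>D. E y d" "\<forall>d\<in>D. \<not> E x d"
    using deletion_witness[OF assms(1)] by blast
  moreover have "y \<noteq> x" using assms irrefl by blast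
  ultimately show ?thesis using assms by blast
qed

text \<open>A set containing a neighbour of v and dominating S has at least |S| vertices, since
  adding v turns it into a total dominating set of G.\<close>
lemma dominating_S_lower_bound:
  assumes X: "X \<subseteq> V" "w \<in> X" "E v w" and dom: "\<forall>s\<in>S. \<exists>y\<in>X. E s y"
  shows "card S \<le> card X"
proof -
  have "total_dom V E (insert v X)"
    unfolding total_dom_def using X dom v_in_V sym adj_v_if_not_in_S by blast
  then have "card S + 1 \<le> card (insert v X)" using gamma_t_le gamma_t_eq by simp
  moreover have "card (insert v X) \<le> card X + 1"
    using finite_subset[OF X(1) finite_V] by (simp add: card_insert_if)
  ultimately show ?thesis by linarith
qed

text \<open>Every vertex other than v has a neighbour in S: the deletion witness for v lies in S and,
  by the lower bound, must be all of S.\<close>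
lemma neighbour_in_S:
  assumes y: "y \<in> V" "y \<noteq> v"
  shows "\<exists>s\<in>S. E y s"
proof -
  obtain D where D: "D \<subseteq> V - {v}" "\<forall>y\<in>V - {v}. \<exists>d\<in>D. E y d" "\<forall>d\<in>D. \<not> E v d"
     "card D < gamma_t V E"
    using deletion_witness[OF v_in_V] by blast
  have DS: "D \<subseteq> S" using D(1,3) S_iff by blast
  obtain w where w: "w \<in> V" "E v w" using neighbour_other_than[OF v_in_V] by blast
  have "total_dom V E (insert w D)"
    unfolding total_dom_def using D(1,2) w by auto
  then have "card S + 1 \<le> card (insert w D)" using gamma_t_le gamma_t_eq by simp
  also have "\<dots> \<le> card D + 1"
    using finite_subset[OF DS finite_S] by (simp add: card_insert_if)
  finally have "card S \<le> card D" by simp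
  then have "D = S" using card_seteq[OF finite_S DS] by simp
  then show ?thesis using D(2) y by blast
qed

text \<open>For two vertices p, q of S and a neighbour w of v, some vertex of S has all its
  S-neighbours in {p, q} and is not adjacent to w; otherwise w together with S - {p, q}
  would dominate S with only |S| - 1 vertices.\<close>
lemma exceptional_vertex:
  assumes pq: "p \<in> S" "q \<in> S" "p \<noteq> q" and w: "w \<in> V" "E v w"
  shows "\<exists>s\<in>S. (\<forall>y\<in>S. E s y \<longrightarrow> y = p \<or> y = q) \<and> \<not> E s w"
proof (rule ccontr)
  assume "\<not> ?thesis"
  then have dom: "\<forall>s\<in>S. \<exists>y\<in>insert w (S - {p, q}). E s y" by blast
  have "insert w (S - {p, q}) \<subseteq> V" using w S_def by blast
  then have "card S \<le> card (insert w (S - {p, q}))"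
    using dominating_S_lower_bound[OF _ _ w(2) dom] by simp
  also have "\<dots> \<le> card (S - {p, q}) + 1" using finite_S by (simp add: card_insert_if)
  also have "\<dots> = card S - 2 + 1" using pq finite_S by (simp add: card_Diff_subset)
  finally have "card S \<le> card S - 2 + 1" .
  moreover have "2 \<le> card S" using card_mono[OF finite_S, of "{p, q}"] pq by simp
  ultimately show False by linarith
qed

subsection \<open>Components of G[S]\<close>

lemma component_subset: "component S E C \<Longrightarrow> C \<subseteq> S"
  unfolding component_def by blast

lemma component_finite: "component S E C \<Longrightarrow> finite C"
  using component_subset finite_S finite_subset by blast

lemma component_closed:
  "component S E C \<Longrightarrow> x \<in> C \<Longrightarrow> y \<in> S \<Longrightarrow> E x y \<or> E y x \<Longrightarrow> y \<in> C"
  unfolding component_def using sym by blast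

lemma in_component: "s \<in> S \<Longrightarrow> \<exists>C. component S E C \<and> s \<in> C"
  using component_exists sym by metis

lemma neighbour_outside_S:
  "s \<in> S \<Longrightarrow> w \<in> V \<Longrightarrow> E s w \<Longrightarrow> w \<notin> S \<Longrightarrow> E v w"
  using adj_v_if_not_in_S S_not_adj_v by blast

text \<open>Since every vertex of S has a neighbour in S, a vertex of S all of whose S-neighbours lie
  in a component belongs to that component.\<close>
lemma S_neighbours_in_component:
  assumes C: "component S E C" and s: "s \<in> S" and nb: "\<forall>y\<in>S. E s y \<longrightarrow> y \<in> C"
  shows "s \<in> C"
proof -
  obtain y where "y \<in> S" "E s y" using neighbour_in_S s S_iff by blast
  then show ?thesis using component_closed[OF C _ s] nb by blast
qed

lemma component_neighbour: "component S E C \<Longrightarrow> x \<in> C \<Longrightarrow> \<exists>y\<in>C. E x y"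
  using neighbour_in_S component_subset S_iff component_closed by blast

text \<open>A set dominating a component C has at least |C| - 1 vertices: replacing C by it in S
  and adding a neighbour of v would dominate S, and S - C dominates itself.\<close>
lemma component_domination_bound:
  assumes C: "component S E C" and X: "X \<subseteq> C" "\<forall>x\<in>C. \<exists>y\<in>X. E x y"
  shows "card C \<le> card X + 1"
proof -
  have CS: "C \<subseteq> S" using component_subset C .
  obtain w where w: "w \<in> V" "E v w" using neighbour_other_than[OF v_in_V] by blast
  let ?Y = "insert w ((S - C) \<union> X)"
  have "\<forall>s\<in>S - C. \<exists>y\<in>S - C. E s y"
    using neighbour_in_S S_iff component_closed[OF C] by (metis Diff_iff)
  then have "\<forall>s\<in>S. \<exists>y\<in>?Y. E s y" using X(2) by blast
  moreover have "?Y \<subseteq> V" using w X CS S_def by blast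
  ultimately have "card S \<le> card ?Y" using dominating_S_lower_bound[OF _ _ w(2)] by blast
  also have "\<dots> \<le> card ((S - C) \<union> X) + 1"
    using finite_subset[OF _ finite_S, of "(S - C) \<union> X"] X(1) CS by (simp add: card_insert_if)
  also have "\<dots> \<le> card (S - C) + card X + 1" using card_Un_le by simp
  also have "card (S - C) = card S - card C" using CS component_finite[OF C]
    by (simp add: card_Diff_subset)
  finally show ?thesis using card_mono[OF finite_S CS] by linarith
qed

lemma component_card_le_3:
  assumes C: "component S E C"
  shows "card C \<le> 3"
proof (rule ccontr)
  assume "\<not> card C \<le> 3"
  then have four: "card C \<ge> 4" by simp
  have "connected_set E C" using C unfolding component_def by blast
  then obtain X where X: "X \<subseteq> C" "card X + 2 \<le> card C" "\<forall>x\<in>C. \<exists>y\<in>X. E x y"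
    using connected_set_small_dominating_set[of E C, OF sym component_finite[OF C] _ four] by blast
  have "card C \<le> card X + 1" using component_domination_bound[OF C X(1,3)] .
  then show False using X(2) by linarith
qed

text \<open>No component is a triangle abc: the private neighbour z of c with respect to a is a
  neighbour of v, and the exceptional vertex for a, b and z cannot exist.\<close>
lemma component_not_triangle:
  assumes C: "component S E C" "C = {a, b, c}" and edges: "E a b" "E b c" "E a c"
  shows False
proof -
  have CS: "{a, b, c} \<subseteq> S" using component_subset C by blast
  then obtain z where z: "z \<in> V" "E c z" "z \<noteq> a" "\<not> E a z"
    using private_neighbour[of a c] edges(3) S_iff by blast
  have "z \<notin> S"
  proof
    assume "z \<in> S"
    then have "z \<in> {a, b, c}" using component_closed[OF C(1)] C(2) z(2) by blast
    then show False using z edges irrefl by blast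
  qed
  then have "E v z" using neighbour_outside_S CS z by blast
  moreover have "a \<noteq> b" using edges irrefl by blast
  ultimately obtain s where s: "s \<in> S" "\<forall>y\<in>S. E s y \<longrightarrow> y = a \<or> y = b" "\<not> E s z"
    using exceptional_vertex[of a b z] CS z(1) by blast
  then have "s \<in> {a, b, c}" using S_neighbours_in_component[OF C(1)] C(2) by blast
  then show False using s z edges sym irrefl CS by blast
qed

lemma component_P2_or_P3:
  assumes C: "component S E C"
  shows "iso_P2 E C \<or> iso_P3 E C"
proof -
  obtain a where "a \<in> C" using C unfolding component_def by blast
  then have "iso_P2 E C \<or> iso_P3 E C \<or> (\<exists>a b c. C = {a, b, c} \<and> E a b \<and> E b c \<and> E a c)"
    using small_set_shapes[of E, OF sym irrefl component_finite[OF C] component_card_le_3[OF C]]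
      component_neighbour[OF C] by blast
  then show ?thesis using component_not_triangle[OF C] by blast
qed

subsection \<open>A component isomorphic to P3\<close>

context
  fixes C a b c
  assumes P3_component: "component S E C"
    and P3_vertices: "C = {a, b, c}" "a \<noteq> b" "b \<noteq> c" "a \<noteq> c"
    and P3_edges: "E a b" "E b c" "\<not> E a c"
begin

lemma P3_in_S: "a \<in> S" "b \<in> S" "c \<in> S"
  using component_subset[OF P3_component] P3_vertices by auto

lemma P3_end_S_neighbour: "y \<in> S \<Longrightarrow> E a y \<or> E c y \<Longrightarrow> y = b"
  using component_closed[OF P3_component] P3_vertices P3_edges irrefl sym by blast

text \<open>The middle vertex has no neighbour in N(v): the exceptional vertex for a, c and such a
  neighbour could only be a vertex of the path, which is impossible.\<close>
lemma P3_middle_avoids_Nv: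
  assumes w: "w \<in> V" "E b w"
  shows "\<not> E v w"
proof
  assume "E v w"
  then obtain s where s: "s \<in> S" "\<forall>y\<in>S. E s y \<longrightarrow> y = a \<or> y = c" "\<not> E s w"
    using exceptional_vertex[of a c w] P3_in_S P3_vertices w(1) by blast
  then have "s \<in> C" using S_neighbours_in_component[OF P3_component] P3_vertices by blast
  then show False using s w P3_in_S P3_vertices P3_edges sym by blast
qed

lemma P3_pendant_neighbour:
  assumes s: "s \<in> S" "s \<notin> C" and w: "w \<in> V" "E v w"
  shows "\<exists>r. r \<in> S \<and> r \<notin> C \<and> E r s \<and> (\<forall>y\<in>S. E r y \<longrightarrow> y = s) \<and> \<not> E r w"
proof -
  have "a \<noteq> s" using s P3_vertices by blast
  then obtain r where r: "r \<in> S" "\<forall>y\<in>S. E r y \<longrightarrow> y = a \<or> y = s" "\<not> E r w"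
    using exceptional_vertex[of a s w] P3_in_S s w by blast
  have "r \<notin> C"
  proof
    assume "r \<in> C"
    then show False using r s P3_in_S P3_vertices P3_edges sym by blast
  qed
  then have only_s: "\<forall>y\<in>S. E r y \<longrightarrow> y = s"
    using r component_closed[OF P3_component, of a r] P3_vertices by blast
  moreover have "E r s" using neighbour_in_S[of r] r(1) S_iff only_s by blast
  ultimately show ?thesis using r \<open>r \<notin> C\<close> by blast
qed

text \<open>Hence S consists of the path alone.  A vertex s outside it would have a pendant
  neighbour r, which in turn has the pendant neighbour s; the private neighbour z of r with
  respect to s lies in N(v), and the pendant neighbour of s missing z can only be r.\<close>
lemma P3_S_eq: "S = C"
proof (rule ccontr)
  assume "S \<noteq> C"
  then obtain s where s: "s \<in> S" "s \<notin> C" using component_subset[OF P3_component] by blast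
  obtain w0 where w0: "w0 \<in> V" "E v w0" using neighbour_other_than[OF v_in_V] by blast
  obtain r where r: "r \<in> S" "r \<notin> C" "E r s" "\<forall>y\<in>S. E r y \<longrightarrow> y = s"
    using P3_pendant_neighbour[OF s w0] by blast
  obtain r' where r': "r' \<in> S" "E r' r" "\<forall>y\<in>S. E r' y \<longrightarrow> y = r"
    using P3_pendant_neighbour[OF r(1,2) w0] by blast
  have "r' = s" using r(4) r'(1,2) sym by blast
  then have s_only_r: "\<forall>y\<in>S. E s y \<longrightarrow> y = r" using r'(3) by blast
  obtain z where z: "z \<in> V" "E r z" "z \<noteq> s" "\<not> E s z"
    using private_neighbour[of s r] r(1,3) s(1) S_iff sym by blast
  have "z \<notin> S" using z r(4) by blast
  then have "E v z" using neighbour_outside_S r(1) z(1,2) by blast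
  then obtain r'' where "r'' \<in> S" "E r'' s" "\<not> E r'' z"
    using P3_pendant_neighbour[OF s z(1)] by blast
  then show False using s_only_r z(2) sym by blast
qed

lemma P3_end_neighbour_in_Nv:
  "x \<in> {a, c} \<Longrightarrow> w \<in> V \<Longrightarrow> E x w \<Longrightarrow> w \<noteq> b \<Longrightarrow> E v w"
  using P3_end_S_neighbour neighbour_outside_S P3_in_S by blast

text \<open>The ends have no common neighbour other than b: the exceptional vertex for b, c and
  such a neighbour would have to be one of the ends.\<close>
lemma P3_ends_disjoint: "(nbhd V E a - {b}) \<inter> (nbhd V E c - {b}) = {}"
proof (rule ccontr)
  assume "\<not> ?thesis"
  then obtain w where w: "w \<in> V" "E a w" "E c w" "w \<noteq> b" unfolding nbhd_def by blast
  then have "E v w" using P3_end_neighbour_in_Nv by blast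
  then obtain s where s: "s \<in> S" "\<forall>y\<in>S. E s y \<longrightarrow> y = b \<or> y = c" "\<not> E s w"
    using exceptional_vertex[of b c w] P3_in_S P3_vertices w(1) by blast
  then show False using P3_S_eq P3_vertices P3_in_S P3_edges w sym by blast
qed

lemma P3_Nv_union: "nbhd V E v = (nbhd V E a - {b}) \<union> (nbhd V E c - {b})"
proof
  show "nbhd V E v \<subseteq> (nbhd V E a - {b}) \<union> (nbhd V E c - {b})"
  proof
    fix w assume "w \<in> nbhd V E v"
    then have w: "w \<in> V" "E v w" unfolding nbhd_def by auto
    then obtain s where s: "s \<in> S" "E w s" using neighbour_in_S irrefl by blast
    have "w \<noteq> b" using w P3_in_S S_iff by blast
    moreover have "s \<noteq> b" using P3_middle_avoids_Nv w s sym by blast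
    ultimately show "w \<in> (nbhd V E a - {b}) \<union> (nbhd V E c - {b})"
      using s P3_S_eq P3_vertices w sym unfolding nbhd_def by blast
  qed
  show "(nbhd V E a - {b}) \<union> (nbhd V E c - {b}) \<subseteq> nbhd V E v"
    using P3_end_neighbour_in_Nv unfolding nbhd_def by blast
qed

end

lemma P3_case:
  "(\<exists>C. component S E C \<and> iso_P3 E C) \<longrightarrow>
     (\<exists>u1 u2 u3. S = {u1, u2, u3} \<and> u1 \<noteq> u2 \<and> u2 \<noteq> u3 \<and> u1 \<noteq> u3 \<and>
        E u1 u2 \<and> E u2 u3 \<and> \<not> E u1 u3 \<and>
        nbhd V E u2 \<inter> nbhd V E v = {} \<and>
        nbhd V E u1 - {u2} \<noteq> {} \<and> nbhd V E u3 - {u2} \<noteq> {} \<and>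
        (nbhd V E u1 - {u2}) \<inter> (nbhd V E u3 - {u2}) = {} \<and>
        nbhd V E v = (nbhd V E u1 - {u2}) \<union> (nbhd V E u3 - {u2}))"
  (is "_ \<longrightarrow> ?path")
proof
  assume "\<exists>C. component S E C \<and> iso_P3 E C"
  then obtain C a b c where P3: "component S E C" "C = {a, b, c}" "a \<noteq> b" "b \<noteq> c" "a \<noteq> c"
    "E a b" "E b c" "\<not> E a c" unfolding iso_P3_def by blast
  have "nbhd V E b \<inter> nbhd V E v = {}"
    using P3_middle_avoids_Nv[OF P3] unfolding nbhd_def by blast
  moreover have "nbhd V E a - {b} \<noteq> {}" "nbhd V E c - {b} \<noteq> {}"
    using neighbour_other_than P3_in_S[OF P3] S_iff unfolding nbhd_def by blast+
  ultimately show ?path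
    using P3_S_eq[OF P3] P3_ends_disjoint[OF P3] P3_Nv_union[OF P3] P3(2-8)
    by (intro exI[of _ a] exI[of _ b] exI[of _ c]) simp
qed

subsection \<open>All components isomorphic to P2\<close>

text \<open>In general N(v) is the union of the sets N(x) - C over the components C and x in C:
  every neighbour of v has a neighbour in S, and conversely a neighbour of x \<in> C outside C
  lies outside S and hence in N(v).\<close>
lemma Nv_union_components:
  "nbhd V E v = \<Union>{nbhd V E x - C | C x. component S E C \<and> x \<in> C}"
proof
  show "nbhd V E v \<subseteq> \<Union>{nbhd V E x - C | C x. component S E C \<and> x \<in> C}"
  proof
    fix w assume "w \<in> nbhd V E v"
    then have w: "w \<in> V" "E v w" "w \<notin> S" unfolding nbhd_def using S_iff by auto
    then obtain s where s: "s \<in> S" "E w s" using neighbour_in_S irrefl by blast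
    obtain C where C: "component S E C" "s \<in> C" using in_component s(1) by blast
    have "w \<in> nbhd V E s - C" using component_subset[OF C(1)] w s sym unfolding nbhd_def by blast
    then show "w \<in> \<Union>{nbhd V E x - C | C x. component S E C \<and> x \<in> C}" using C by blast
  qed
  show "\<Union>{nbhd V E x - C | C x. component S E C \<and> x \<in> C} \<subseteq> nbhd V E v"
  proof
    fix w assume "w \<in> \<Union>{nbhd V E x - C | C x. component S E C \<and> x \<in> C}"
    then obtain C x where C: "component S E C" "x \<in> C" and w: "w \<in> V" "E x w" "w \<notin> C"
      unfolding nbhd_def by blast
    have "w \<notin> S" using component_closed[OF C] w by blast
    then show "w \<in> nbhd V E v"
      using neighbour_outside_S component_subset[OF C(1)] C(2) w unfolding nbhd_def by blast
  qed
qed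

lemma P2_partner:
  assumes C: "component S E C" "iso_P2 E C" and x: "x \<in> C"
  shows "\<exists>x'. C = {x, x'} \<and> x \<noteq> x' \<and> E x x' \<and> (\<forall>y\<in>S. E x y \<longrightarrow> y = x')"
proof -
  obtain p q where pq: "C = {p, q}" "p \<noteq> q" "E p q" using C(2) unfolding iso_P2_def by blast
  obtain x' where x': "C = {x, x'}" "x \<noteq> x'" "E x x'"
  proof (cases "x = p")
    case True then show ?thesis using that pq by blast
  next
    case False then show ?thesis using that[of p] pq x sym by (simp add: insert_commute)
  qed
  moreover have "\<forall>y\<in>S. E x y \<longrightarrow> y = x'"
    using component_closed[OF C(1) x] x' irrefl by blast
  ultimately show ?thesis by blast
qed

context
  assumes all_P2: "\<forall>C. component S E C \<longrightarrow> iso_P2 E C"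
begin

text \<open>Every u \<in> S has a neighbour in N(v): the private neighbour of u with respect to its
  partner lies outside S.\<close>
lemma P2_meets_Nv:
  assumes u: "u \<in> S"
  shows "nbhd V E u \<inter> nbhd V E v \<noteq> {}"
proof -
  obtain C where C: "component S E C" "u \<in> C" using in_component u by blast
  then obtain u' where u': "C = {u, u'}" "E u u'" "\<forall>y\<in>S. E u y \<longrightarrow> y = u'"
    using P2_partner all_P2 by blast
  have "u' \<in> S" using component_subset[OF C(1)] u' by blast
  then obtain z where z: "z \<in> V" "E u z" "z \<noteq> u'" "\<not> E u' z"
    using private_neighbour[of u' u] u u'(2) S_iff sym by blast
  have "E v z" using neighbour_outside_S u z u'(3) by blast
  then show ?thesis using z unfolding nbhd_def by blast
qed

text \<open>Two distinct vertices x \<in> C and y \<in> D of S have no common neighbour outside their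
  components: the exceptional vertex for their partners and such a neighbour cannot exist.\<close>
lemma P2_private_parts_disjoint:
  assumes C: "component S E C" "x \<in> C" and D: "component S E D" "y \<in> D" and xy: "x \<noteq> y"
  shows "(nbhd V E x - C) \<inter> (nbhd V E y - D) = {}"
proof (rule ccontr)
  assume "\<not> ?thesis"
  then obtain w where w: "w \<in> V" "E x w" "E y w" "w \<notin> C" unfolding nbhd_def by blast
  obtain x' where x': "C = {x, x'}" "x \<noteq> x'" "E x x'" "\<forall>z\<in>S. E x z \<longrightarrow> z = x'"
    using P2_partner C all_P2 by blast
  obtain y' where y': "D = {y, y'}" "y \<noteq> y'" "E y y'" "\<forall>z\<in>S. E y z \<longrightarrow> z = y'"
    using P2_partner D all_P2 by blast
  have S: "x \<in> S" "x' \<in> S" "y \<in> S" "y' \<in> S"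
    using component_subset C D x' y' by blast+
  have "w \<notin> S" using component_closed[OF C] w by blast
  then have "E v w" using neighbour_outside_S S(1) w by blast
  moreover have "x' \<noteq> y'"
  proof
    assume "x' = y'"
    then have "y \<in> C" using component_closed[OF C(1), of x' y] x' y' S by blast
    then show False using x' y' xy irrefl \<open>x' = y'\<close> by blast
  qed
  ultimately obtain s where s: "s \<in> S" "\<forall>z\<in>S. E s z \<longrightarrow> z = x' \<or> z = y'" "\<not> E s w"
    using exceptional_vertex[of x' y' w] S w(1) by blast
  obtain t where t: "t \<in> S" "E s t" using neighbour_in_S s(1) S_iff by blast
  have "s \<noteq> x" "s \<noteq> y" using s w by auto
  have "t = x' \<or> t = y'" using s(2) t by blast
  then show False
  proof
    assume "t = x'"
    then have "s \<in> C" using component_closed[OF C(1), of x' s] x' S(2) s(1) t(2) by blast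
    then show False using x' \<open>s \<noteq> x\<close> \<open>t = x'\<close> t(2) irrefl by blast
  next
    assume "t = y'"
    then have "s \<in> D" using component_closed[OF D(1), of y' s] y' S(4) s(1) t(2) by blast
    then show False using y' \<open>s \<noteq> y\<close> \<open>t = y'\<close> t(2) irrefl by blast
  qed
qed

lemma P2_case:
  "(\<forall>u\<in>S. nbhd V E u \<inter> nbhd V E v \<noteq> {}) \<and>
   (\<forall>C D x y. component S E C \<and> component S E D \<and> x \<in> C \<and> y \<in> D \<and> x \<noteq> y \<longrightarrow>
      (nbhd V E x - C) \<inter> (nbhd V E y - D) = {}) \<and>
   nbhd V E v = \<Union>{nbhd V E x - C | C x. component S E C \<and> x \<in> C}"
  using P2_meets_Nv P2_private_parts_disjoint Nv_union_components by blast

end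

end

theorem mainTheorem4:
  fixes V :: "'a set" and E :: "'a \<Rightarrow> 'a \<Rightarrow> bool" and v :: 'a
  assumes G: "graph V E"
    and crit: "gamma_t_critical V E"
    and gt: "gamma_t V E = card V - max_deg V E"
    and mindeg: "min_deg V E \<ge> 2"
    and v: "v \<in> V" "deg V E v = max_deg V E"
  defines "S \<equiv> V - cnbhd V E v"
  shows "(\<forall>C. component S E C \<longrightarrow> iso_P2 E C \<or> iso_P3 E C)
    \<and> ((\<exists>C. component S E C \<and> iso_P3 E C) \<longrightarrow>
        (\<exists>u1 u2 u3. S = {u1, u2, u3} \<and> u1 \<noteq> u2 \<and> u2 \<noteq> u3 \<and> u1 \<noteq> u3 \<and>
           E u1 u2 \<and> E u2 u3 \<and> \<not> E u1 u3 \<and>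
           nbhd V E u2 \<inter> nbhd V E v = {} \<and>
           nbhd V E u1 - {u2} \<noteq> {} \<and> nbhd V E u3 - {u2} \<noteq> {} \<and>
           (nbhd V E u1 - {u2}) \<inter> (nbhd V E u3 - {u2}) = {} \<and>
           nbhd V E v = (nbhd V E u1 - {u2}) \<union> (nbhd V E u3 - {u2})))
    \<and> ((\<forall>C. component S E C \<longrightarrow> iso_P2 E C) \<longrightarrow>
        (\<forall>u\<in>S. nbhd V E u \<inter> nbhd V E v \<noteq> {}) \<and>
        (\<forall>C D x y. component S E C \<and> component S E D \<and> x \<in> C \<and> y \<in> D \<and> x \<noteq> y \<longrightarrow>
            (nbhd V E x - C) \<inter> (nbhd V E y - D) = {}) \<and>
        nbhd V E v = (\<Union>{nbhd V E x - C | C x. component S E C \<and> x \<in> C}))"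
proof -
  interpret extremal_critical V E v S
    using G crit gt mindeg v S_def by unfold_locales simp_all
  show ?thesis using component_P2_or_P3 P3_case P2_case by blast
qed

end
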